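(* Let $u\in C([0,\infty)^2)$ be a viscosity subsolution and $v\in C([0,\infty)^2)$ a viscosity supersolution of \[ \partial_t f - 2(\partial_h f)^2 = 0 \ \text{ in } (0,\infty)^2, \qquad -\partial_h f = 0 \ \text{ on } (0,\infty)\times\{0\}, \] such that both $u$ and $v$ are uniformly Lipschitz continuous in the variable $h$. Then \[ \sup_{[0,\infty)^2}(u-v)=\sup_{\{0\}\times[0,\infty)}(u-v). \]
   Context: Viscosity solutions: $f\in C([0,\infty)^2)$ (variables $(t,h)$) is a viscosity subsolution if for every $(t,h)\in(0,\infty)\times[0,\infty)$ and $\phi\in C^\infty((0,\infty)\times[0,\infty))$ such that $f-\phi$ has a local maximum at $(t,h)$, we have $(\partial_t\phi-2(\partial_h\phi)^2)(t,h)\le0$ if $h>0$, and $\min(-\partial_h\phi,\partial_t\phi-2(\partial_h\phi)^2)(t,h)\le0$ if $h=0$. It is a viscosity supersolution if for every such $(t,h),\phi$ with $f-\phi$ having a local minimum at $(t,h)$, we have $(\partial_t\phi-2(\partial_h\phi)^2)(t,h)\ge0$ if $h>0$, and $\max(-\partial_h\phi,\partial_t\phi-2(\partial_h\phi)^2)(t,h)\ge0$ if $h=0$. "Uniformly Lipschitz in $h$" means there is $L<\infty$ with $|u(t,h)-u(t,h')|\le L|h-h'|$ for all $t,h,h'\ge0$. *)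

theory Defs
  imports "HOL-Analysis.Analysis"
begin

fun Ck_on :: "nat \<Rightarrow> (real \<times> real) set \<Rightarrow> (real \<times> real \<Rightarrow> real) \<Rightarrow> bool" where
  "Ck_on 0 S f = continuous_on S f"
| "Ck_on (Suc k) S f =
     (\<exists>f'. (\<forall>x\<in>S. (f has_derivative f' x) (at x)) \<and> (\<forall>w. Ck_on k S (\<lambda>x. f' x w)))"

definition smooth_on :: "(real \<times> real) set \<Rightarrow> (real \<times> real \<Rightarrow> real) \<Rightarrow> bool" where
  "smooth_on S f \<longleftrightarrow> (\<forall>k. Ck_on k S f)"

definition quadrant :: "(real \<times> real) set" where
  "quadrant = {0..} \<times> {0..}"

definition test_dom :: "(real \<times> real) set" where
  "test_dom = {0<..} \<times> {0..}"

text \<open>phi \<in> C^\<infinity>((0,\<infinity>)\<times>[0,\<infinity>)): restriction of a smooth function on an open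
  neighbourhood of (0,\<infinity>)\<times>[0,\<infinity>).\<close>
definition test_function :: "(real \<times> real \<Rightarrow> real) \<Rightarrow> bool" where
  "test_function \<phi> \<longleftrightarrow> (\<exists>U. open U \<and> test_dom \<subseteq> U \<and> smooth_on U \<phi>)"

definition local_max_at :: "(real \<times> real \<Rightarrow> real) \<Rightarrow> (real \<times> real) \<Rightarrow> bool" where
  "local_max_at g x \<longleftrightarrow> (\<exists>e>0. \<forall>y\<in>test_dom. dist y x < e \<longrightarrow> g y \<le> g x)"

definition local_min_at :: "(real \<times> real \<Rightarrow> real) \<Rightarrow> (real \<times> real) \<Rightarrow> bool" where
  "local_min_at g x \<longleftrightarrow> (\<exists>e>0. \<forall>y\<in>test_dom. dist y x < e \<longrightarrow> g x \<le> g y)"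

text \<open>D (1,0) = \<partial>_t \<phi>, D (0,1) = \<partial>_h \<phi> at the point, where D is the derivative of \<phi>.\<close>
definition viscosity_subsolution :: "(real \<times> real \<Rightarrow> real) \<Rightarrow> bool" where
  "viscosity_subsolution f \<longleftrightarrow> continuous_on quadrant f \<and>
    (\<forall>t h \<phi> D. t > 0 \<and> h \<ge> 0 \<and> test_function \<phi> \<and> (\<phi> has_derivative D) (at (t, h)) \<and>
       local_max_at (\<lambda>y. f y - \<phi> y) (t, h) \<longrightarrow>
       (if h > 0 then D (1, 0) - 2 * (D (0, 1))\<^sup>2 \<le> 0
        else min (- D (0, 1)) (D (1, 0) - 2 * (D (0, 1))\<^sup>2) \<le> 0))"

definition viscosity_supersolution :: "(real \<times> real \<Rightarrow> real) \<Rightarrow> bool" where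
  "viscosity_supersolution f \<longleftrightarrow> continuous_on quadrant f \<and>
    (\<forall>t h \<phi> D. t > 0 \<and> h \<ge> 0 \<and> test_function \<phi> \<and> (\<phi> has_derivative D) (at (t, h)) \<and>
       local_min_at (\<lambda>y. f y - \<phi> y) (t, h) \<longrightarrow>
       (if h > 0 then D (1, 0) - 2 * (D (0, 1))\<^sup>2 \<ge> 0
        else max (- D (0, 1)) (D (1, 0) - 2 * (D (0, 1))\<^sup>2) \<ge> 0))"

definition unif_lipschitz_in_h :: "(real \<times> real \<Rightarrow> real) \<Rightarrow> bool" where
  "unif_lipschitz_in_h f \<longleftrightarrow>
     (\<exists>L. \<forall>t h h'. t \<ge> 0 \<and> h \<ge> 0 \<and> h' \<ge> 0 \<longrightarrow> \<bar>f (t, h) - f (t, h')\<bar> \<le> L * \<bar>h - h'\<bar>)"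

end

theory Submission
  imports Defs
begin

(*
  Doubling the variables.  Suppose u - v exceeds the supremum M of its initial values by eta > 0
  at a point (t0, h0), put T = t0 + 1 and maximise

    u (t, h) - v (s, k) - ((t - s)^2 + (h - k)^2) / (2 eps) + gam (h + k) - theta (t, h) - theta (s, k),
    theta (t, h) = lam (1 + h^2) (1 + t)^N,

  over t, s in [0, T] and h, k >= 0.  Since u - v grows at most linearly in h, the quadratic growth
  of theta in h makes the maximum attained.  Choosing lam with theta (t0, h0) = eta / 4 and N large
  makes theta so large at time T that the maximum is not attained there; for small eps it is not
  attained at time 0 either, where u - v <= M and the two time variables are forced together.
  At an interior maximum the functional gives test functions touching u from above at (t, h) and
  v from below at (s, k).  Lipschitz continuity in h bounds their h-derivatives P, Q by L, and the
  tilt gam (h + k) gives them the sign that excludes the Neumann alternative on h = 0.  Subtracting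
  the two viscosity inequalities leaves theta_t (t, h) + theta_t (s, k) <= 2 (P - Q) (P + Q)
  <= 4 L (theta_h (t, h) + theta_h (s, k) + 2 gam), which fails as soon as N >= 8 L (1 + T).
*)

section \<open>Smooth test functions\<close>

lemma Ck_on_const: "Ck_on k S (\<lambda>x. c)"
proof (induction k arbitrary: c)
  case 0
  then show ?case by simp
next
  case (Suc k)
  show ?case by (auto intro!: exI[of _ "\<lambda>x w. 0"] Suc)
qed

lemma Ck_on_bounded_linear:
  assumes "bounded_linear l"
  shows "Ck_on k S l"
proof (cases k)
  case 0
  then show ?thesis using assms by (simp add: linear_continuous_on)
next
  case (Suc m)
  then show ?thesis
    by (auto intro!: exI[of _ "\<lambda>x. l"] Ck_on_const bounded_linear.has_derivative[OF assms]
        has_derivative_ident)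
qed

lemma Ck_on_fst: "Ck_on k S fst"
  by (rule Ck_on_bounded_linear) (rule bounded_linear_fst)

lemma Ck_on_snd: "Ck_on k S snd"
  by (rule Ck_on_bounded_linear) (rule bounded_linear_snd)

lemma Ck_on_SucD: "Ck_on (Suc k) S f \<Longrightarrow> Ck_on k S f"
proof (induction k arbitrary: f)
  case 0
  then show ?case
    by (auto intro!: continuous_at_imp_continuous_on dest: has_derivative_continuous)
next
  case (Suc k)
  then obtain f' where "\<forall>x\<in>S. (f has_derivative f' x) (at x)" "\<forall>w. Ck_on (Suc k) S (\<lambda>x. f' x w)"
    unfolding Ck_on.simps(2)[of "Suc k"] by blast
  with Suc.IH show ?case unfolding Ck_on.simps(2)[of k] by blast
qed

lemma Ck_on_add: "Ck_on k S f \<Longrightarrow> Ck_on k S g \<Longrightarrow> Ck_on k S (\<lambda>x. f x + g x)"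
proof (induction k arbitrary: f g)
  case 0
  then show ?case by (simp add: continuous_on_add)
next
  case (Suc k)
  obtain f' where f': "\<forall>x\<in>S. (f has_derivative f' x) (at x)" "\<forall>w. Ck_on k S (\<lambda>x. f' x w)"
    using Suc.prems(1) by auto
  obtain g' where g': "\<forall>x\<in>S. (g has_derivative g' x) (at x)" "\<forall>w. Ck_on k S (\<lambda>x. g' x w)"
    using Suc.prems(2) by auto
  show ?case
    using f' g' Suc.IH by (auto intro!: exI[of _ "\<lambda>x w. f' x w + g' x w"] has_derivative_add)
qed

lemma Ck_on_mult: "Ck_on k S f \<Longrightarrow> Ck_on k S g \<Longrightarrow> Ck_on k S (\<lambda>x. f x * g x)"
proof (induction k arbitrary: f g)
  case 0
  then show ?case by (simp add: continuous_on_mult)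
next
  case (Suc k)
  obtain f' where f': "\<forall>x\<in>S. (f has_derivative f' x) (at x)" "\<forall>w. Ck_on k S (\<lambda>x. f' x w)"
    using Suc.prems(1) by auto
  obtain g' where g': "\<forall>x\<in>S. (g has_derivative g' x) (at x)" "\<forall>w. Ck_on k S (\<lambda>x. g' x w)"
    using Suc.prems(2) by auto
  have f: "Ck_on k S f" and g: "Ck_on k S g"
    using Suc.prems by (blast intro: Ck_on_SucD)+
  have "Ck_on k S (\<lambda>x. f x * g' x w + f' x w * g x)" for w
    using Suc.IH[OF f g'(2)[rule_format]] Suc.IH[OF f'(2)[rule_format] g] by (rule Ck_on_add)
  then show ?case
    using f'(1) g'(1)
    by (auto intro!: exI[of _ "\<lambda>x w. f x * g' x w + f' x w * g x"] has_derivative_mult)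
qed

lemma Ck_on_diff: "Ck_on k S f \<Longrightarrow> Ck_on k S g \<Longrightarrow> Ck_on k S (\<lambda>x. f x - g x)"
  using Ck_on_add[of k S f "\<lambda>x. (- 1) * g x"] Ck_on_mult[OF Ck_on_const, of k S g "- 1"] by simp

lemma Ck_on_divide_const: "Ck_on k S f \<Longrightarrow> Ck_on k S (\<lambda>x. f x / c)"
  using Ck_on_mult[OF _ Ck_on_const, of k S f "1 / c"] by simp

lemma Ck_on_power: "Ck_on k S f \<Longrightarrow> Ck_on k S (\<lambda>x. f x ^ n)"
  by (induction n) (auto intro: Ck_on_mult Ck_on_const)

lemmas Ck_on_intros =
  Ck_on_const Ck_on_fst Ck_on_snd Ck_on_add Ck_on_diff Ck_on_mult Ck_on_divide_const Ck_on_power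

lemma test_functionI: "(\<And>k. Ck_on k UNIV f) \<Longrightarrow> test_function f"
  unfolding test_function_def smooth_on_def by auto

section \<open>Test functions touching Lipschitz functions\<close>

lemma local_min_at_iff_local_max_at_uminus:
  "local_min_at g x \<longleftrightarrow> local_max_at (\<lambda>y. - g y) x"
  unfolding local_min_at_def local_max_at_def by simp

definition strip :: "real \<Rightarrow> (real \<times> real) set" where
  "strip T = {0..T} \<times> {0..}"

lemma local_max_at_if_max_on_strip:
  assumes "\<And>y. y \<in> strip T \<Longrightarrow> g y \<le> g (t, h)" and "t < T"
  shows "local_max_at g (t, h)"
  unfolding local_max_at_def
proof (intro exI[of _ "T - t"] conjI ballI impI)
  fix y assume y: "y \<in> test_dom" "dist y (t, h) < T - t"
  have "fst y - t \<le> dist y (t, h)"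
    using dist_fst_le[of y "(t, h)"] by (simp add: dist_real_def)
  then have "y \<in> strip T" using y unfolding test_dom_def strip_def by (auto simp: mem_Times_iff)
  then show "g y \<le> g (t, h)" by (rule assms(1))
qed (use assms(2) in simp)

lemma has_real_derivative_vertical_slice:
  assumes "(\<phi> has_derivative D) (at (t, h))"
  shows "((\<lambda>r. \<phi> (t, h + r)) has_real_derivative D (0, 1)) (at 0)"
proof -
  have "((\<lambda>r::real. (t, h + r)) has_derivative (\<lambda>r. (0, r))) (at 0)"
    by (auto intro!: derivative_eq_intros)
  then have "((\<lambda>r. \<phi> (t, h + r)) has_derivative (\<lambda>r. D (0, r))) (at 0)"
    using has_derivative_compose[of "\<lambda>r. (t, h + r)" "\<lambda>r. (0, r)" 0 UNIV \<phi> D] assms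
    by (simp add: o_def)
  moreover have "D (0, r) = D (0, 1) * r" for r
    using linear_scale[OF has_derivative_linear[OF assms], of r "(0, 1)"] by simp
  ultimately show ?thesis
    unfolding has_field_derivative_def by (metis (no_types, lifting) ext)
qed

lemma lipschitz_local_max_dh_bounds:
  assumes D: "(\<phi> has_derivative D) (at (t, h))" and t: "t > 0" and h: "h \<ge> 0"
    and max: "local_max_at (\<lambda>y. u y - \<phi> y) (t, h)"
    and lip: "\<And>h h'. h \<ge> 0 \<Longrightarrow> h' \<ge> 0 \<Longrightarrow> \<bar>u (t, h) - u (t, h')\<bar> \<le> L * \<bar>h - h'\<bar>"
  shows "- L \<le> D (0, 1)" and "h > 0 \<Longrightarrow> D (0, 1) \<le> L"
proof -
  obtain e where e: "e > 0"
    "\<And>y. y \<in> test_dom \<Longrightarrow> dist y (t, h) < e \<Longrightarrow> u y - \<phi> y \<le> u (t, h) - \<phi> (t, h)"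
    using max unfolding local_max_at_def by blast
  define g where "g r = \<phi> (t, h + r)" for r
  have "((\<lambda>r. (g (0 + r) - g 0) / r) \<longlongrightarrow> D (0, 1)) (at 0)"
    using has_real_derivative_vertical_slice[OF D] unfolding g_def DERIV_def by simp
  then have lim_right: "((\<lambda>r. (g r - g 0) / r) \<longlongrightarrow> D (0, 1)) (at_right 0)"
    and lim_left: "((\<lambda>r. (g r - g 0) / r) \<longlongrightarrow> D (0, 1)) (at_left 0)"
    by (auto elim: filterlim_mono simp: at_within_le_at)
  have increment: "- L * \<bar>r\<bar> \<le> g r - g 0" if "\<bar>r\<bar> < e" "h + r \<ge> 0" for r
  proof -
    have "(t, h + r) \<in> test_dom" using t that unfolding test_dom_def by auto
    moreover have "dist (t, h + r) (t, h) < e" using that by (simp add: dist_prod_def dist_real_def)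
    ultimately have "u (t, h + r) - \<phi> (t, h + r) \<le> u (t, h) - \<phi> (t, h)" using e by blast
    moreover have "\<bar>u (t, h + r) - u (t, h)\<bar> \<le> L * \<bar>r\<bar>" using lip[OF that(2) h] by simp
    ultimately show ?thesis unfolding g_def by auto
  qed
  show "- L \<le> D (0, 1)"
  proof (rule tendsto_lowerbound[OF lim_right])
    have "- L \<le> (g r - g 0) / r" if "0 < r" "r < e" for r
      using increment[of r] that h by (simp add: field_simps)
    then show "\<forall>\<^sub>F r in at_right 0. - L \<le> (g r - g 0) / r"
      unfolding eventually_at_right_field using e by blast
  qed simp
  show "D (0, 1) \<le> L" if "h > 0"
  proof (rule tendsto_upperbound[OF lim_left])
    have "(g r - g 0) / r \<le> L" if "- min e h < r" "r < 0" for r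
      using increment[of r] that by (simp add: field_simps)
    then show "\<forall>\<^sub>F r in at_left 0. (g r - g 0) / r \<le> L"
      unfolding eventually_at_left_field using e \<open>h > 0\<close> by (intro exI[of _ "- min e h"]) auto
  qed simp
qed

lemma lipschitz_local_min_dh_bounds:
  assumes D: "(\<phi> has_derivative D) (at (t, h))" and t: "t > 0" and h: "h \<ge> 0"
    and min: "local_min_at (\<lambda>y. v y - \<phi> y) (t, h)"
    and lip: "\<And>h h'. h \<ge> 0 \<Longrightarrow> h' \<ge> 0 \<Longrightarrow> \<bar>v (t, h) - v (t, h')\<bar> \<le> L * \<bar>h - h'\<bar>"
  shows "D (0, 1) \<le> L" and "h > 0 \<Longrightarrow> - L \<le> D (0, 1)"
proof -
  have D': "((\<lambda>y. - \<phi> y) has_derivative (\<lambda>w. - D w)) (at (t, h))"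
    using D by (rule has_derivative_minus)
  have max': "local_max_at (\<lambda>y. - v y - - \<phi> y) (t, h)"
    using min by (simp add: local_min_at_iff_local_max_at_uminus)
  have lip': "\<bar>- v (t, h) - - v (t, h')\<bar> \<le> L * \<bar>h - h'\<bar>" if "h \<ge> 0" "h' \<ge> 0" for h h'
    using lip[OF that] by linarith
  show "D (0, 1) \<le> L" "h > 0 \<Longrightarrow> - L \<le> D (0, 1)"
    using lipschitz_local_max_dh_bounds[OF D' t h max' lip'] by auto
qed

lemma subsolution_at_local_max:
  assumes "viscosity_subsolution u" and "test_function \<phi>" and D: "(\<phi> has_derivative D) (at (t, h))"
    and t: "t > 0" and h: "h \<ge> 0" and max: "local_max_at (\<lambda>y. u y - \<phi> y) (t, h)"
    and lip: "\<And>h h'. h \<ge> 0 \<Longrightarrow> h' \<ge> 0 \<Longrightarrow> \<bar>u (t, h) - u (t, h')\<bar> \<le> L * \<bar>h - h'\<bar>"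
    and boundary: "h = 0 \<Longrightarrow> D (0, 1) < 0"
  shows "D (1, 0) \<le> 2 * (D (0, 1))\<^sup>2" and "\<bar>D (0, 1)\<bar> \<le> L"
proof -
  \<comment> \<open>At \<open>h = 0\<close> the sign condition rules out the Neumann alternative \<open>- D (0, 1) \<le> 0\<close>.\<close>
  have "if h > 0 then D (1, 0) - 2 * (D (0, 1))\<^sup>2 \<le> 0
        else min (- D (0, 1)) (D (1, 0) - 2 * (D (0, 1))\<^sup>2) \<le> 0"
    using assms(1-6) unfolding viscosity_subsolution_def by blast
  then show "D (1, 0) \<le> 2 * (D (0, 1))\<^sup>2"
    using h boundary by (cases "h > 0") auto
  have "0 \<le> L" using lip[of 1 0] by simp
  then show "\<bar>D (0, 1)\<bar> \<le> L"
    using lipschitz_local_max_dh_bounds[OF D t h max lip] h boundary by (cases "h > 0") auto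
qed

lemma supersolution_at_local_min:
  assumes "viscosity_supersolution v" and "test_function \<phi>" and D: "(\<phi> has_derivative D) (at (t, h))"
    and t: "t > 0" and h: "h \<ge> 0" and min: "local_min_at (\<lambda>y. v y - \<phi> y) (t, h)"
    and lip: "\<And>h h'. h \<ge> 0 \<Longrightarrow> h' \<ge> 0 \<Longrightarrow> \<bar>v (t, h) - v (t, h')\<bar> \<le> L * \<bar>h - h'\<bar>"
    and boundary: "h = 0 \<Longrightarrow> D (0, 1) > 0"
  shows "2 * (D (0, 1))\<^sup>2 \<le> D (1, 0)" and "\<bar>D (0, 1)\<bar> \<le> L"
proof -
  have "if h > 0 then D (1, 0) - 2 * (D (0, 1))\<^sup>2 \<ge> 0
        else max (- D (0, 1)) (D (1, 0) - 2 * (D (0, 1))\<^sup>2) \<ge> 0"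
    using assms(1-6) unfolding viscosity_supersolution_def by blast
  then show "2 * (D (0, 1))\<^sup>2 \<le> D (1, 0)"
    using h boundary by (cases "h > 0") auto
  have "0 \<le> L" using lip[of 1 0] by simp
  then show "\<bar>D (0, 1)\<bar> \<le> L"
    using lipschitz_local_min_dh_bounds[OF D t h min lip] h boundary by (cases "h > 0") auto
qed

section \<open>Penalty functions\<close>

lemma linear_minus_square_le:
  fixes b c x :: real
  assumes "b > 0"
  shows "c * x - b * x\<^sup>2 \<le> c\<^sup>2 / (4 * b)"
proof -
  have "4 * b * (c * x - b * x\<^sup>2) \<le> c\<^sup>2"
    using zero_le_power2[of "c - 2 * b * x"] by (simp add: power2_eq_square algebra_simps)
  then show ?thesis using assms by (simp add: field_simps mult.commute)
qed

lemma linear_minus_square_over_le: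
  fixes eps L x :: real
  assumes "eps > 0"
  shows "L * x - x\<^sup>2 / (2 * eps) \<le> L\<^sup>2 * eps / 2"
  using linear_minus_square_le[of "1 / (2 * eps)" L x] assms by (simp add: field_simps)

lemma linear_minus_square_eventually_less:
  fixes b c d :: real
  assumes "b > 0"
  shows "\<exists>B. \<forall>x\<ge>B. c * x - b * x\<^sup>2 < d"
proof (intro exI allI impI)
  fix x :: real
  assume x: "max 1 ((\<bar>c\<bar> + \<bar>d\<bar> + 1) / b) \<le> x"
  then have x1: "x \<ge> 1" and "\<bar>c\<bar> + \<bar>d\<bar> + 1 \<le> b * x"
    using assms by (auto simp: field_simps)
  then have "(\<bar>c\<bar> + \<bar>d\<bar> + 1) * x \<le> b * x\<^sup>2"
    using mult_right_mono[of "\<bar>c\<bar> + \<bar>d\<bar> + 1" "b * x" x] by (simp add: power2_eq_square)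
  moreover have "c * x \<le> \<bar>c\<bar> * x" and "\<bar>d\<bar> + 1 \<le> (\<bar>d\<bar> + 1) * x"
    using x1 mult_right_mono[of c "\<bar>c\<bar>" x] mult_left_mono[of 1 x "\<bar>d\<bar> + 1"] by simp_all
  then have "c * x - d < (\<bar>c\<bar> + \<bar>d\<bar> + 1) * x"
    by (simp add: algebra_simps)
  ultimately show "c * x - b * x\<^sup>2 < d" by linarith
qed

definition penalty :: "real \<Rightarrow> nat \<Rightarrow> real \<Rightarrow> real \<Rightarrow> real" where
  "penalty lam N t h = lam * (1 + h\<^sup>2) * (1 + t) ^ N"

definition penalty_dt :: "real \<Rightarrow> nat \<Rightarrow> real \<Rightarrow> real \<Rightarrow> real" where
  "penalty_dt lam N t h = lam * real N * (1 + h\<^sup>2) * (1 + t) ^ (N - 1)"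

definition penalty_dh :: "real \<Rightarrow> nat \<Rightarrow> real \<Rightarrow> real \<Rightarrow> real" where
  "penalty_dh lam N t h = 2 * lam * h * (1 + t) ^ N"

lemma penalty_ge:
  assumes "lam \<ge> 0" and "t \<ge> 0"
  shows "lam * (1 + h\<^sup>2) \<le> penalty lam N t h"
  using mult_left_mono[of 1 "(1 + t) ^ N" "lam * (1 + h\<^sup>2)"] assms
  unfolding penalty_def by simp

lemma mult_le_penalty:
  assumes "0 \<le> gam" and "gam \<le> lam" and "t \<ge> 0" and "x \<ge> 0"
  shows "gam * x \<le> penalty lam N t x"
proof -
  have "x \<le> 1 + x\<^sup>2"
    using zero_le_power2[of "x - 1"] \<open>x \<ge> 0\<close> by (simp add: power2_eq_square algebra_simps)
  then have "gam * x \<le> lam * (1 + x\<^sup>2)"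
    using assms by (intro mult_mono) auto
  then show ?thesis
    using penalty_ge[of lam t x N] assms by linarith
qed

lemma penalty_dt_ge:
  assumes "0 \<le> t" and "t \<le> T" and "h \<ge> 0" and "lam > 0" and "L \<ge> 0"
    and "8 * L * (1 + T) \<le> real N" and "N \<ge> 1"
  shows "4 * L * penalty_dh lam N t h + lam * real N / 2 \<le> penalty_dt lam N t h"
proof -
  define P where "P = (1 + t) ^ (N - 1)"
  have P: "P \<ge> 1" unfolding P_def using assms(1) by simp
  have "(1 + t) ^ N = (1 + t) * P"
    unfolding P_def using \<open>N \<ge> 1\<close> by (metis Suc_diff_1 less_le_trans power_Suc zero_less_one)
  then have "4 * L * penalty_dh lam N t h = (8 * L * (1 + t)) * (lam * h * P)"
    unfolding penalty_dh_def by (simp add: algebra_simps)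
  also have "\<dots> \<le> real N * (lam * ((1 + h\<^sup>2) / 2) * P)"
  proof (rule mult_mono)
    show "8 * L * (1 + t) \<le> real N"
      using assms mult_left_mono[of "1 + t" "1 + T" "8 * L"] by linarith
    have "h \<le> (1 + h\<^sup>2) / 2"
      using zero_le_power2[of "h - 1"] by (simp add: power2_eq_square algebra_simps)
    then show "lam * h * P \<le> lam * ((1 + h\<^sup>2) / 2) * P"
      using assms P by (intro mult_right_mono mult_left_mono) auto
  qed (use assms P in auto)
  finally have "4 * L * penalty_dh lam N t h \<le> penalty_dt lam N t h / 2"
    unfolding penalty_dt_def P_def by (simp add: algebra_simps)
  moreover have "lam * real N \<le> penalty_dt lam N t h"
    using mult_left_mono[of 1 "(1 + h\<^sup>2) * P" "lam * real N"] mult_mono[of 1 "1 + h\<^sup>2" 1 P] P assms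
    unfolding penalty_dt_def P_def by (simp add: algebra_simps)
  ultimately show ?thesis by linarith
qed

lemma exists_penalty_exponent:
  assumes "0 \<le> t0" and "t0 < T" and "a > 0"
  obtains N lam where "N \<ge> N0" and "lam > 0" and "penalty lam N t0 h0 = a"
    and "K \<le> lam * (1 + T) ^ N"
proof -
  define r where "r = (1 + T) / (1 + t0)"
  have r: "r > 1" unfolding r_def using assms by simp
  obtain N1 where N1: "K * (1 + h0\<^sup>2) / a < r ^ N1" using real_arch_pow[OF r] by blast
  define N where "N = max N0 N1"
  have "K * (1 + h0\<^sup>2) < a * r ^ N1"
    using N1 assms(3) by (simp add: field_simps)
  also have "\<dots> \<le> a * r ^ N"
    using r assms(3) by (intro mult_left_mono power_increasing) (auto simp: N_def)
  finally have "K * (1 + h0\<^sup>2) \<le> a * r ^ N" by simp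
  define lam where "lam = a / ((1 + h0\<^sup>2) * (1 + t0) ^ N)"
  have pos: "1 + h0\<^sup>2 > 0" "1 + t0 > 0" "(1 + t0) ^ N > 0"
    using assms by (simp_all add: add_pos_nonneg)
  show thesis
  proof (rule that[of N lam])
    show "N0 \<le> N" by (simp add: N_def)
    show "lam > 0" unfolding lam_def using pos assms(3) by simp
    show "penalty lam N t0 h0 = a" unfolding lam_def penalty_def using pos by (simp add: mult.assoc)
    have "lam * (1 + T) ^ N = a * r ^ N / (1 + h0\<^sup>2)"
      unfolding lam_def r_def using assms by (simp add: power_divide field_simps)
    then show "K \<le> lam * (1 + T) ^ N"
      using \<open>K * (1 + h0\<^sup>2) \<le> a * r ^ N\<close> by (simp add: field_simps add_pos_nonneg)
  qed
qed

definition doubling_penalty :: "real \<Rightarrow> real \<Rightarrow> real \<Rightarrow> nat \<Rightarrow> real \<Rightarrow> real \<Rightarrow> real \<Rightarrow> real \<Rightarrow> real"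
  where "doubling_penalty eps gam lam N t h s k =
    ((t - s)\<^sup>2 + (h - k)\<^sup>2) / (2 * eps) - gam * (h + k) + penalty lam N t h + penalty lam N s k"

lemma doubling_penalty_commute:
  "doubling_penalty eps gam lam N t h s k = doubling_penalty eps gam lam N s k t h"
  unfolding doubling_penalty_def by (simp add: power2_commute algebra_simps)

lemma Ck_on_doubling_penalty:
  "Ck_on m S (\<lambda>y. doubling_penalty eps gam lam N (fst y) (snd y) s k)"
  unfolding doubling_penalty_def penalty_def by (intro Ck_on_intros)

lemma has_derivative_doubling_penalty:
  assumes "eps > 0"
  shows "((\<lambda>y. doubling_penalty eps gam lam N (fst y) (snd y) s k) has_derivative
    (\<lambda>w. ((t - s) / eps + penalty_dt lam N t h) * fst w
       + ((h - k) / eps - gam + penalty_dh lam N t h) * snd w)) (at (t, h))"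
  unfolding doubling_penalty_def penalty_def penalty_dt_def penalty_dh_def
  using assms by (auto intro!: derivative_eq_intros ext simp: field_simps power2_eq_square)

section \<open>Doubling the variables\<close>

lemma continuous_attains_sup_dominated:
  fixes F :: "'a::topological_space \<Rightarrow> real"
  assumes "compact K" and "K \<subseteq> D" and "p0 \<in> K" and "continuous_on K F"
    and "\<And>p. p \<in> D - K \<Longrightarrow> F p \<le> F p0"
  obtains z where "z \<in> K" and "\<And>p. p \<in> D \<Longrightarrow> F p \<le> F z"
proof -
  obtain z where z: "z \<in> K" "\<And>p. p \<in> K \<Longrightarrow> F p \<le> F z"
    using continuous_attains_sup[OF assms(1) _ assms(4)] assms(3) by blast
  show thesis
  proof (rule that[OF z(1)])
    fix p assume "p \<in> D"
    show "F p \<le> F z"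
    proof (cases "p \<in> K")
      case False
      then have "F p \<le> F p0" using \<open>p \<in> D\<close> assms(5) by blast
      also have "\<dots> \<le> F z" by (rule z(2)[OF assms(3)])
      finally show ?thesis .
    qed (rule z(2))
  qed
qed

lemma continuous_on_quadrant_uniformly_in_t:
  fixes w :: "real \<times> real \<Rightarrow> real"
  assumes "continuous_on quadrant w" and "e > 0"
  obtains \<rho> where "\<rho> > 0"
    and "\<And>t s h. t \<in> {0..T} \<Longrightarrow> s \<in> {0..T} \<Longrightarrow> h \<in> {0..B} \<Longrightarrow> \<bar>t - s\<bar> < \<rho> \<Longrightarrow>
      \<bar>w (t, h) - w (s, h)\<bar> < e"
proof -
  have "continuous_on ({0..T} \<times> {0..B}) w"
    using assms(1) by (rule continuous_on_subset) (auto simp: quadrant_def)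
  then have "uniformly_continuous_on ({0..T} \<times> {0..B}) w"
    by (intro compact_uniformly_continuous compact_Times compact_Icc)
  then obtain \<rho> where \<rho>: "\<rho> > 0"
    "\<And>x x'. x \<in> {0..T} \<times> {0..B} \<Longrightarrow> x' \<in> {0..T} \<times> {0..B} \<Longrightarrow> dist x' x < \<rho> \<Longrightarrow>
      dist (w x') (w x) < e"
    using assms(2) unfolding uniformly_continuous_on_def by blast
  show thesis
  proof (rule that[OF \<rho>(1)])
    fix t s h
    assume "t \<in> {0..T}" "s \<in> {0..T}" "h \<in> {0..B}" "\<bar>t - s\<bar> < \<rho>"
    then show "\<bar>w (t, h) - w (s, h)\<bar> < e"
      using \<rho>(2)[of "(s, h)" "(t, h)"] by (simp add: dist_Pair_Pair dist_real_def)
  qed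
qed

locale comparison =
  fixes u v :: "real \<times> real \<Rightarrow> real" and L :: real
  assumes subsolution: "viscosity_subsolution u"
    and supersolution: "viscosity_supersolution v"
    and lipschitz_u: "\<And>t h h'. t \<ge> 0 \<Longrightarrow> h \<ge> 0 \<Longrightarrow> h' \<ge> 0 \<Longrightarrow> \<bar>u (t, h) - u (t, h')\<bar> \<le> L * \<bar>h - h'\<bar>"
    and lipschitz_v: "\<And>t h h'. t \<ge> 0 \<Longrightarrow> h \<ge> 0 \<Longrightarrow> h' \<ge> 0 \<Longrightarrow> \<bar>v (t, h) - v (t, h')\<bar> \<le> L * \<bar>h - h'\<bar>"
    and L_pos: "L > 0"
begin

definition difference_bounded :: "real \<Rightarrow> real \<Rightarrow> bool" where
  "difference_bounded T A \<longleftrightarrow> (\<forall>t h s k. (t, h) \<in> strip T \<longrightarrow> (s, k) \<in> strip T \<longrightarrow>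
    u (t, h) - v (s, k) \<le> A + L * h + L * k)"

lemma difference_boundedD:
  "difference_bounded T A \<Longrightarrow> (t, h) \<in> strip T \<Longrightarrow> (s, k) \<in> strip T \<Longrightarrow>
    u (t, h) - v (s, k) \<le> A + L * h + L * k"
  unfolding difference_bounded_def by blast

lemma exists_difference_bound:
  assumes "T \<ge> 0"
  shows "\<exists>A. difference_bounded T A"
proof -
  have cu: "continuous_on quadrant u" and cv: "continuous_on quadrant v"
    using subsolution supersolution
    unfolding viscosity_subsolution_def viscosity_supersolution_def by blast+
  have ne: "{0..T} \<noteq> {}" using assms by simp
  have cu0: "continuous_on {0..T} (\<lambda>t. u (t, 0))"
    by (rule continuous_on_compose2[OF cu]) (auto intro!: continuous_intros simp: quadrant_def)
  obtain tu where tu: "\<And>t. t \<in> {0..T} \<Longrightarrow> u (t, 0) \<le> u (tu, 0)"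
    using continuous_attains_sup[OF compact_Icc ne cu0] by blast
  have cv0: "continuous_on {0..T} (\<lambda>t. v (t, 0))"
    by (rule continuous_on_compose2[OF cv]) (auto intro!: continuous_intros simp: quadrant_def)
  obtain tv where tv: "\<And>t. t \<in> {0..T} \<Longrightarrow> v (tv, 0) \<le> v (t, 0)"
    using continuous_attains_inf[OF compact_Icc ne cv0] by blast
  have "difference_bounded T (u (tu, 0) - v (tv, 0))"
    unfolding difference_bounded_def
  proof (intro allI impI)
    fix t h s k assume "(t, h) \<in> strip T" "(s, k) \<in> strip T"
    then have "t \<in> {0..T}" "s \<in> {0..T}" "h \<ge> 0" "k \<ge> 0" by (auto simp: strip_def)
    then show "u (t, h) - v (s, k) \<le> u (tu, 0) - v (tv, 0) + L * h + L * k"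
      using lipschitz_u[of t h 0] lipschitz_v[of s 0 k] tu[of t] tv[of s] by auto
  qed
  then show ?thesis ..
qed

definition doubling :: "real \<Rightarrow> real \<Rightarrow> real \<Rightarrow> nat \<Rightarrow> real \<Rightarrow> real \<Rightarrow> real \<Rightarrow> real \<Rightarrow> real" where
  "doubling eps gam lam N t h s k = u (t, h) - v (s, k) - doubling_penalty eps gam lam N t h s k"

lemma subsolution_at_doubling_max:
  assumes eps: "eps > 0" and gam: "gam > 0"
    and max: "\<And>t' h'. (t', h') \<in> strip T \<Longrightarrow>
      doubling eps gam lam N t' h' s k \<le> doubling eps gam lam N t h s k"
    and t: "0 < t" "t < T" and h: "h \<ge> 0" and k: "k \<ge> 0"
  shows "(t - s) / eps + penalty_dt lam N t h \<le> 2 * ((h - k) / eps - gam + penalty_dh lam N t h)\<^sup>2"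
    and "\<bar>(h - k) / eps - gam + penalty_dh lam N t h\<bar> \<le> L"
proof -
  let ?\<phi> = "\<lambda>y. doubling_penalty eps gam lam N (fst y) (snd y) s k"
  have "local_max_at (\<lambda>y. u y - ?\<phi> y) (t, h)"
    using max t(2) by (intro local_max_at_if_max_on_strip) (auto simp: doubling_def)
  moreover have "h = 0 \<Longrightarrow> (h - k) / eps - gam + penalty_dh lam N t h < 0"
    using gam divide_nonneg_pos[OF k eps] by (simp add: penalty_dh_def)
  ultimately show "(t - s) / eps + penalty_dt lam N t h \<le> 2 * ((h - k) / eps - gam + penalty_dh lam N t h)\<^sup>2"
    and "\<bar>(h - k) / eps - gam + penalty_dh lam N t h\<bar> \<le> L"
    using subsolution_at_local_max[OF subsolution test_functionI[OF Ck_on_doubling_penalty]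
        has_derivative_doubling_penalty[OF eps] t(1) h _ lipschitz_u[of t]] t
    by simp_all
qed

lemma supersolution_at_doubling_max:
  assumes eps: "eps > 0" and gam: "gam > 0"
    and max: "\<And>s' k'. (s', k') \<in> strip T \<Longrightarrow>
      doubling eps gam lam N t h s' k' \<le> doubling eps gam lam N t h s k"
    and s: "0 < s" "s < T" and h: "h \<ge> 0" and k: "k \<ge> 0"
  shows "2 * ((h - k) / eps + gam - penalty_dh lam N s k)\<^sup>2 \<le> (t - s) / eps - penalty_dt lam N s k"
    and "\<bar>(h - k) / eps + gam - penalty_dh lam N s k\<bar> \<le> L"
proof -
  let ?\<phi> = "\<lambda>y. - doubling_penalty eps gam lam N (fst y) (snd y) t h"
  have "local_max_at (\<lambda>y. - (v y - ?\<phi> y)) (s, k)"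
    using max s(2) by (intro local_max_at_if_max_on_strip)
      (auto simp: doubling_def doubling_penalty_commute[of _ _ _ _ t h])
  then have min: "local_min_at (\<lambda>y. v y - ?\<phi> y) (s, k)"
    by (simp add: local_min_at_iff_local_max_at_uminus)
  moreover have "k = 0 \<Longrightarrow> (h - k) / eps + gam - penalty_dh lam N s k > 0"
    using gam divide_nonneg_pos[OF h eps] by (simp add: penalty_dh_def)
  moreover have test: "test_function ?\<phi>"
    by (intro test_functionI Ck_on_diff[OF Ck_on_const Ck_on_doubling_penalty, of _ _ 0, simplified])
  moreover have deriv: "(?\<phi> has_derivative (\<lambda>w. ((t - s) / eps - penalty_dt lam N s k) * fst w
      + ((h - k) / eps + gam - penalty_dh lam N s k) * snd w)) (at (s, k))"
    using has_derivative_minus[OF has_derivative_doubling_penalty[OF eps, of gam lam N t h s k]]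
    by (rule has_derivative_eq_rhs) (use eps in \<open>simp add: fun_eq_iff field_simps\<close>)
  ultimately show "2 * ((h - k) / eps + gam - penalty_dh lam N s k)\<^sup>2 \<le> (t - s) / eps - penalty_dt lam N s k"
    and "\<bar>(h - k) / eps + gam - penalty_dh lam N s k\<bar> \<le> L"
    using supersolution_at_local_min[OF supersolution test deriv s(1) k min lipschitz_v[of s]] s
    by simp_all
qed

lemma no_interior_doubling_max:
  assumes eps: "eps > 0" and lam: "lam > 0" and gam: "gam > 0"
    and N: "N \<ge> 1" "8 * L * (1 + T) \<le> real N" and gam_small: "8 * L * gam < lam * real N"
    and max: "\<And>t' h' s' k'. (t', h') \<in> strip T \<Longrightarrow> (s', k') \<in> strip T \<Longrightarrow>
      doubling eps gam lam N t' h' s' k' \<le> doubling eps gam lam N t h s k"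
    and t: "0 < t" "t < T" and s: "0 < s" "s < T" and h: "h \<ge> 0" and k: "k \<ge> 0"
  shows False
proof -
  define P where "P = (h - k) / eps - gam + penalty_dh lam N t h"
  define Q where "Q = (h - k) / eps + gam - penalty_dh lam N s k"
  have th: "(t, h) \<in> strip T" and sk: "(s, k) \<in> strip T"
    using t s h k by (simp_all add: strip_def)
  have max_th: "\<And>t' h'. (t', h') \<in> strip T \<Longrightarrow>
      doubling eps gam lam N t' h' s k \<le> doubling eps gam lam N t h s k"
    using max sk by blast
  have max_sk: "\<And>s' k'. (s', k') \<in> strip T \<Longrightarrow>
      doubling eps gam lam N t h s' k' \<le> doubling eps gam lam N t h s k"
    using max th by blast
  have sub: "(t - s) / eps + penalty_dt lam N t h \<le> 2 * P\<^sup>2" "\<bar>P\<bar> \<le> L"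
    unfolding P_def using subsolution_at_doubling_max[OF eps gam _ t h k] max_th by blast+
  have super: "2 * Q\<^sup>2 \<le> (t - s) / eps - penalty_dt lam N s k" "\<bar>Q\<bar> \<le> L"
    unfolding Q_def using supersolution_at_doubling_max[OF eps gam _ s h k] max_sk by blast+
  have dh_nonneg: "penalty_dh lam N t h \<ge> 0" "penalty_dh lam N s k \<ge> 0"
    unfolding penalty_dh_def using lam t s h k by simp_all
  have sum_bound: "\<bar>P + Q\<bar> \<le> 2 * L"
    using abs_triangle_ineq[of P Q] sub(2) super(2) by linarith
  have diff_bound: "\<bar>P - Q\<bar> \<le> penalty_dh lam N t h + penalty_dh lam N s k + 2 * gam"
    unfolding P_def Q_def abs_le_iff using dh_nonneg gam by simp
  have "penalty_dt lam N t h + penalty_dt lam N s k \<le> 2 * ((P - Q) * (P + Q))"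
    using sub(1) super(1) by (simp add: power2_eq_square algebra_simps)
  also have "\<dots> \<le> 2 * (\<bar>P - Q\<bar> * \<bar>P + Q\<bar>)"
    using abs_ge_self[of "(P - Q) * (P + Q)"] by (simp add: abs_mult)
  also have "\<dots> \<le> 2 * ((penalty_dh lam N t h + penalty_dh lam N s k + 2 * gam) * (2 * L))"
    using sum_bound diff_bound by (intro mult_left_mono mult_mono) auto
  finally have "penalty_dt lam N t h + penalty_dt lam N s k
      \<le> 4 * L * penalty_dh lam N t h + 4 * L * penalty_dh lam N s k + 8 * L * gam"
    by (simp add: algebra_simps)
  moreover have "4 * L * penalty_dh lam N t h + lam * real N / 2 \<le> penalty_dt lam N t h"
    and "4 * L * penalty_dh lam N s k + lam * real N / 2 \<le> penalty_dt lam N s k"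
    using t s h k lam L_pos N by (intro penalty_dt_ge; simp)+
  ultimately show False
    using gam_small by linarith
qed

lemma doubling_le_quadratic:
  assumes A: "difference_bounded T A"
    and "eps > 0" and "lam \<ge> 0" and th: "(t, h) \<in> strip T" and sk: "(s, k) \<in> strip T"
  shows "doubling eps gam lam N t h s k
    \<le> A + ((L + gam) * h - lam * h\<^sup>2) + ((L + gam) * k - lam * k\<^sup>2) - (t - s)\<^sup>2 / (2 * eps)"
proof -
  have "lam * (1 + h\<^sup>2) \<le> penalty lam N t h" and "lam * (1 + k\<^sup>2) \<le> penalty lam N s k"
    using th sk \<open>lam \<ge> 0\<close> by (auto intro: penalty_ge simp: strip_def)
  moreover have "(h - k)\<^sup>2 / (2 * eps) \<ge> 0" using \<open>eps > 0\<close> by simp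
  ultimately show ?thesis
    using difference_boundedD[OF A th sk] \<open>lam \<ge> 0\<close>
    unfolding doubling_def doubling_penalty_def add_divide_distrib by (simp add: algebra_simps)
qed

lemma doubling_coercive:
  fixes m :: real
  assumes A: "difference_bounded T A"
    and lam: "lam > 0"
  obtains B where "B \<ge> 0" and "\<And>(eps::real) N t h s k. eps > 0 \<Longrightarrow> (t, h) \<in> strip T \<Longrightarrow> (s, k) \<in> strip T \<Longrightarrow>
    B < h \<or> B < k \<Longrightarrow> doubling eps gam lam N t h s k < m"
proof -
  define c where "c = L + gam"
  obtain B where B: "\<And>x. x \<ge> B \<Longrightarrow> c * x - lam * x\<^sup>2 < m - A - c\<^sup>2 / (4 * lam)"
    using linear_minus_square_eventually_less[OF lam] by blast
  show thesis
  proof (rule that[of "max B 0"])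
    fix eps :: real and N t h s k
    assume eps: "eps > 0" and th: "(t, h) \<in> strip T" and sk: "(s, k) \<in> strip T"
      and large: "max B 0 < h \<or> max B 0 < k"
    have "c * h - lam * h\<^sup>2 + (c * k - lam * k\<^sup>2) < m - A"
      using large B[of h] B[of k] linear_minus_square_le[OF lam, of c h]
        linear_minus_square_le[OF lam, of c k] by auto
    then show "doubling eps gam lam N t h s k < m"
      using doubling_le_quadratic[OF A eps less_imp_le[OF lam] th sk, of gam N] eps
        divide_nonneg_pos[OF zero_le_power2[of "t - s"], of "2 * eps"]
      unfolding c_def by linarith
  qed simp
qed

lemma doubling_times_close:
  fixes m :: real
  assumes A: "difference_bounded T A"
    and lam: "lam > 0" and rho: "\<rho> > 0"
  obtains e0 where "e0 > 0" and "\<And>eps N t h s k. 0 < eps \<Longrightarrow> eps \<le> e0 \<Longrightarrow>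
    (t, h) \<in> strip T \<Longrightarrow> (s, k) \<in> strip T \<Longrightarrow> m \<le> doubling eps gam lam N t h s k \<Longrightarrow> \<bar>t - s\<bar> < \<rho>"
proof -
  define C where "C = A + (L + gam)\<^sup>2 / (2 * lam) - m"
  show thesis
  proof (rule that[of "\<rho>\<^sup>2 / (4 * (\<bar>C\<bar> + 1))"])
    fix eps N t h s k
    assume eps: "0 < eps" "eps \<le> \<rho>\<^sup>2 / (4 * (\<bar>C\<bar> + 1))"
      and th: "(t, h) \<in> strip T" and sk: "(s, k) \<in> strip T"
      and large: "m \<le> doubling eps gam lam N t h s k"
    have "(t - s)\<^sup>2 / (2 * eps) \<le> C"
      using large doubling_le_quadratic[OF A eps(1) less_imp_le[OF lam] th sk, of gam N]
        linear_minus_square_le[OF lam, of "L + gam" h] linear_minus_square_le[OF lam, of "L + gam" k]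
      unfolding C_def by simp
    then have "(t - s)\<^sup>2 \<le> 2 * eps * C"
      using eps(1) by (simp add: field_simps)
    also have "\<dots> \<le> 2 * eps * (\<bar>C\<bar> + 1)"
      using eps(1) by (intro mult_left_mono) auto
    also have "\<dots> < 4 * eps * (\<bar>C\<bar> + 1)"
      using eps(1) by (intro mult_strict_right_mono) auto
    also have "\<dots> \<le> \<rho>\<^sup>2"
      using eps(2) abs_ge_zero[of C] by (simp add: field_simps)
    finally have "\<bar>t - s\<bar>\<^sup>2 < \<rho>\<^sup>2" by simp
    then show "\<bar>t - s\<bar> < \<rho>"
      using power_less_imp_less_base[of "\<bar>t - s\<bar>" 2 \<rho>] rho by simp
  qed (use rho in \<open>simp add: add_pos_nonneg\<close>)
qed

lemma doubling_attains_max: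
  assumes A: "difference_bounded T A"
    and eps: "eps > 0" and lam: "lam > 0" and T: "T \<ge> 0"
  obtains t h s k where "(t, h) \<in> strip T" and "(s, k) \<in> strip T"
    and "\<And>t' h' s' k'. (t', h') \<in> strip T \<Longrightarrow> (s', k') \<in> strip T \<Longrightarrow>
      doubling eps gam lam N t' h' s' k' \<le> doubling eps gam lam N t h s k"
proof -
  define F where "F p = u (fst p) - v (snd p)
    - doubling_penalty eps gam lam N (fst (fst p)) (snd (fst p)) (fst (snd p)) (snd (snd p))"
    for p :: "(real \<times> real) \<times> real \<times> real"
  have F: "doubling eps gam lam N t h s k = F ((t, h), (s, k))" for t h s k
    by (simp add: F_def doubling_def)
  obtain B where "B \<ge> 0" and B: "\<And>t h s k. (t, h) \<in> strip T \<Longrightarrow> (s, k) \<in> strip T \<Longrightarrow>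
      B < h \<or> B < k \<Longrightarrow> doubling eps gam lam N t h s k < doubling eps gam lam N 0 0 0 0"
    using doubling_coercive[OF A lam] eps by metis
  define K where "K = ({0..T} \<times> {0..B}) \<times> ({0..T} \<times> {0..B})"
  have Ku: "fst ` K \<subseteq> quadrant" and Kv: "snd ` K \<subseteq> quadrant"
    using \<open>B \<ge> 0\<close> by (auto simp: K_def quadrant_def)
  have cu: "continuous_on quadrant u" and cv: "continuous_on quadrant v"
    using subsolution supersolution
    unfolding viscosity_subsolution_def viscosity_supersolution_def by blast+
  have "continuous_on K (\<lambda>p. u (fst p))"
    by (rule continuous_on_compose2[OF cu continuous_on_fst[OF continuous_on_id] Ku])
  moreover have "continuous_on K (\<lambda>p. v (snd p))"
    by (rule continuous_on_compose2[OF cv continuous_on_snd[OF continuous_on_id] Kv])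
  ultimately have "continuous_on K F"
    unfolding F_def doubling_penalty_def penalty_def by (intro continuous_intros) (use eps in auto)
  moreover have "compact K" unfolding K_def by (intro compact_Times compact_Icc)
  moreover have K: "K \<subseteq> strip T \<times> strip T" and "((0, 0), (0, 0)) \<in> K"
    using T \<open>B \<ge> 0\<close> by (auto simp: K_def strip_def)
  moreover have "F p \<le> F ((0, 0), (0, 0))" if "p \<in> strip T \<times> strip T - K" for p
    using that B[of "fst (fst p)" "snd (fst p)" "fst (snd p)" "snd (snd p)"]
    by (force simp: F K_def strip_def)
  ultimately obtain z where "z \<in> K" and z: "\<And>p. p \<in> strip T \<times> strip T \<Longrightarrow> F p \<le> F z"
    using continuous_attains_sup_dominated[of K "strip T \<times> strip T" "((0, 0), (0, 0))" F] by blast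
  then show thesis
    using \<open>K \<subseteq> strip T \<times> strip T\<close>
    by (intro that[of "fst (fst z)" "snd (fst z)" "fst (snd z)" "snd (snd z)"]) (auto simp: F)
qed

lemma doubling_le_shifted:
  assumes eps: "eps > 0" and gam: "0 \<le> gam" "gam \<le> lam"
    and th: "(t, h) \<in> strip T" and sk: "(s, k) \<in> strip T"
  shows "doubling eps gam lam N t h s k \<le> u (t, h) - v (s, h) + L\<^sup>2 * eps / 2"
proof -
  have "v (s, h) - v (s, k) \<le> L * \<bar>h - k\<bar>"
    using lipschitz_v[of s h k] th sk by (auto simp: strip_def)
  moreover have "L * \<bar>h - k\<bar> - \<bar>h - k\<bar>\<^sup>2 / (2 * eps) \<le> L\<^sup>2 * eps / 2"
    by (rule linear_minus_square_over_le[OF eps])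
  moreover have "gam * h \<le> penalty lam N t h" and "gam * k \<le> penalty lam N s k"
    using th sk gam by (auto intro: mult_le_penalty simp: strip_def)
  moreover have "(t - s)\<^sup>2 / (2 * eps) \<ge> 0" using eps by simp
  ultimately show ?thesis
    unfolding doubling_def doubling_penalty_def add_divide_distrib by (simp add: algebra_simps)
qed

lemma doubling_le_at_initial_time:
  assumes initial: "\<And>h. h \<ge> 0 \<Longrightarrow> u (0, h) - v (0, h) \<le> M"
    and eps: "eps > 0" and gam: "0 \<le> gam" "gam \<le> lam"
    and th: "(t, h) \<in> strip T" and sk: "(s, k) \<in> strip T" and initial_time: "t = 0 \<or> s = 0"
  shows "doubling eps gam lam N t h s k
    \<le> M + \<bar>u (t, h) - u (s, h)\<bar> + \<bar>v (t, h) - v (s, h)\<bar> + L\<^sup>2 * eps / 2"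
proof -
  have "u (t, h) - v (s, h) \<le> M + \<bar>u (t, h) - u (s, h)\<bar> + \<bar>v (t, h) - v (s, h)\<bar>"
    using initial[of h] initial_time th by (auto simp: strip_def)
  then show ?thesis
    using doubling_le_shifted[OF eps gam th sk, of N] by linarith
qed

lemma doubling_le_at_final_time:
  assumes A: "difference_bounded T A"
    and eps: "eps > 0" and gam: "0 \<le> gam" "gam \<le> lam" "gam \<le> 1"
    and mu: "1 \<le> lam * (1 + T) ^ N"
    and th: "(t, h) \<in> strip T" and sk: "(s, k) \<in> strip T" and final: "t = T \<or> s = T"
  shows "doubling eps gam lam N t h s k \<le> A + (2 * L + 1)\<^sup>2 - lam * (1 + T) ^ N + L\<^sup>2 * eps / 2"
proof -
  define \<mu> where "\<mu> = lam * (1 + T) ^ N"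
  have final_row: "(2 * L + gam) * x - penalty lam N T x \<le> (2 * L + 1)\<^sup>2 - \<mu>" for x
  proof -
    have "(2 * L + gam) * x - \<mu> * x\<^sup>2 \<le> (2 * L + gam)\<^sup>2 / (4 * \<mu>)"
      using mu unfolding \<mu>_def by (intro linear_minus_square_le) simp
    also have "\<dots> \<le> (2 * L + gam)\<^sup>2 / 1"
      using mu unfolding \<mu>_def by (intro divide_left_mono) auto
    also have "\<dots> \<le> (2 * L + 1)\<^sup>2"
      using gam L_pos by (simp add: power_mono)
    finally show ?thesis
      unfolding penalty_def \<mu>_def by (simp add: algebra_simps)
  qed
  have h: "h \<ge> 0" and k: "k \<ge> 0" and "t \<ge> 0" "s \<ge> 0"
    using th sk by (auto simp: strip_def)
  have "L * \<bar>h - k\<bar> - \<bar>h - k\<bar>\<^sup>2 / (2 * eps) \<le> L\<^sup>2 * eps / 2"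
    by (rule linear_minus_square_over_le[OF eps])
  moreover have "gam * h \<le> penalty lam N t h" and "gam * k \<le> penalty lam N s k"
    using h k \<open>t \<ge> 0\<close> \<open>s \<ge> 0\<close> gam by (auto intro: mult_le_penalty)
  moreover have "(t - s)\<^sup>2 / (2 * eps) \<ge> 0" using eps by simp
  moreover have "L * k \<le> L * h + L * \<bar>h - k\<bar>" and "L * h \<le> L * k + L * \<bar>h - k\<bar>"
    using L_pos by (simp_all add: abs_if algebra_simps)
  ultimately show ?thesis
    using difference_boundedD[OF A th sk] final final_row[of h] final_row[of k]
    unfolding doubling_def doubling_penalty_def add_divide_distrib \<mu>_def
    by (auto simp: algebra_simps)
qed

lemma doubling_max_interior:
  assumes initial: "\<And>h. h \<ge> 0 \<Longrightarrow> u (0, h) - v (0, h) \<le> M"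
    and A: "difference_bounded T A"
    and eps: "eps > 0" "L\<^sup>2 * eps / 2 \<le> \<eta> / 8"
    and gam: "0 \<le> gam" "gam \<le> lam" "gam \<le> 1"
    and mu: "\<bar>A - M\<bar> + (2 * L + 1)\<^sup>2 + 1 \<le> lam * (1 + T) ^ N"
    and th: "(t, h) \<in> strip T" and sk: "(s, k) \<in> strip T"
    and large: "M + \<eta> / 2 \<le> doubling eps gam lam N t h s k"
    and close: "\<bar>u (t, h) - u (s, h)\<bar> < \<eta> / 8" "\<bar>v (t, h) - v (s, h)\<bar> < \<eta> / 8"
  shows "0 < t" and "t < T" and "0 < s" and "s < T"
proof -
  have "\<not> (t = 0 \<or> s = 0)"
  proof
    assume "t = 0 \<or> s = 0"
    from doubling_le_at_initial_time[OF initial eps(1) gam(1,2) th sk this, of N]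
    show False using large close eps(2) by linarith
  qed
  moreover have "\<not> (t = T \<or> s = T)"
  proof
    assume "t = T \<or> s = T"
    moreover have "1 \<le> lam * (1 + T) ^ N"
      using mu zero_le_power2[of "2 * L + 1"] abs_ge_zero[of "A - M"] by linarith
    ultimately have "doubling eps gam lam N t h s k
        \<le> A + (2 * L + 1)\<^sup>2 - lam * (1 + T) ^ N + L\<^sup>2 * eps / 2"
      using doubling_le_at_final_time[OF A eps(1) gam _ th sk] by blast
    then show False
      using large mu eps(2) abs_ge_self[of "A - M"] close(1) abs_ge_zero[of "u (t, h) - u (s, h)"]
      by linarith
  qed
  ultimately show "0 < t" "t < T" "0 < s" "s < T"
    using th sk by (auto simp: strip_def)
qed

lemma exists_doubling_parameters:
  assumes "0 \<le> t0" and "t0 < T" and "\<eta> > 0"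
  obtains N lam gam where "N \<ge> 1" and "8 * L * (1 + T) \<le> real N"
    and "lam > 0" and "penalty lam N t0 h0 = \<eta> / 4" and "K \<le> lam * (1 + T) ^ N"
    and "0 < gam" and "gam \<le> lam" and "gam \<le> 1" and "8 * L * gam < lam * real N"
proof -
  have "\<eta> / 4 > 0" using assms(3) by simp
  then obtain N lam where N: "Suc (nat \<lceil>8 * L * (1 + T)\<rceil>) \<le> N" and lam: "lam > 0"
    and "penalty lam N t0 h0 = \<eta> / 4" and "K \<le> lam * (1 + T) ^ N"
    using exists_penalty_exponent[OF assms(1,2)] by blast
  moreover have N1: "N \<ge> 1" using N by simp
  moreover have "8 * L * (1 + T) \<le> real N"
    using real_nat_ceiling_ge[of "8 * L * (1 + T)"] N by linarith
  moreover define gam where "gam = min 1 (lam / (16 * (L + 1)))"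
  moreover have "gam \<le> lam"
    using lam L_pos by (simp add: gam_def min.coboundedI2 field_simps)
  moreover have "8 * L * gam < lam * real N"
  proof -
    have "8 * L * gam \<le> 8 * L * (lam / (16 * (L + 1)))"
      using L_pos by (intro mult_left_mono) (auto simp: gam_def)
    also have "\<dots> < lam" using lam L_pos by (simp add: field_simps add_pos_pos)
    also have "\<dots> \<le> lam * real N" using lam N1 by simp
    finally show ?thesis .
  qed
  ultimately show thesis
    using lam L_pos by (intro that[of N lam gam]) (auto simp: gam_def)
qed

lemma exists_eps_small_oscillation:
  assumes A: "difference_bounded T A" and lam: "lam > 0" and \<eta>: "\<eta> > 0"
  obtains eps where "eps > 0" and "L\<^sup>2 * eps / 2 \<le> \<eta> / 8"
    and "\<And>N t h s k. (t, h) \<in> strip T \<Longrightarrow> (s, k) \<in> strip T \<Longrightarrow>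
      M + \<eta> / 2 \<le> doubling eps gam lam N t h s k \<Longrightarrow>
      \<bar>u (t, h) - u (s, h)\<bar> < \<eta> / 8 \<and> \<bar>v (t, h) - v (s, h)\<bar> < \<eta> / 8"
proof -
  obtain B where "B \<ge> 0" and B: "\<And>eps N t h s k. eps > 0 \<Longrightarrow> (t, h) \<in> strip T \<Longrightarrow>
      (s, k) \<in> strip T \<Longrightarrow> B < h \<or> B < k \<Longrightarrow> doubling eps gam lam N t h s k < M + \<eta> / 2"
    by (rule doubling_coercive[where m = "M + \<eta> / 2" and gam = gam, OF A lam]) (rule that)
  have \<eta>8: "\<eta> / 8 > 0" using \<eta> by simp
  have cu: "continuous_on quadrant u" and cv: "continuous_on quadrant v"
    using subsolution supersolution
    unfolding viscosity_subsolution_def viscosity_supersolution_def by blast+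
  obtain \<rho>u where "\<rho>u > 0"
    and \<rho>u: "\<And>t s h. t \<in> {0..T} \<Longrightarrow> s \<in> {0..T} \<Longrightarrow> h \<in> {0..B} \<Longrightarrow> \<bar>t - s\<bar> < \<rho>u \<Longrightarrow>
      \<bar>u (t, h) - u (s, h)\<bar> < \<eta> / 8"
    by (rule continuous_on_quadrant_uniformly_in_t[OF cu \<eta>8]) (rule that)
  obtain \<rho>v where "\<rho>v > 0"
    and \<rho>v: "\<And>t s h. t \<in> {0..T} \<Longrightarrow> s \<in> {0..T} \<Longrightarrow> h \<in> {0..B} \<Longrightarrow> \<bar>t - s\<bar> < \<rho>v \<Longrightarrow>
      \<bar>v (t, h) - v (s, h)\<bar> < \<eta> / 8"
    by (rule continuous_on_quadrant_uniformly_in_t[OF cv \<eta>8]) (rule that)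
  have "min \<rho>u \<rho>v > 0" using \<open>\<rho>u > 0\<close> \<open>\<rho>v > 0\<close> by simp
  then obtain e0 where "e0 > 0" and e0: "\<And>eps N t h s k. 0 < eps \<Longrightarrow> eps \<le> e0 \<Longrightarrow>
      (t, h) \<in> strip T \<Longrightarrow> (s, k) \<in> strip T \<Longrightarrow> M + \<eta> / 2 \<le> doubling eps gam lam N t h s k \<Longrightarrow>
      \<bar>t - s\<bar> < min \<rho>u \<rho>v"
    by (rule doubling_times_close[OF A lam]) (rule that)
  define eps where "eps = min e0 (\<eta> / (4 * L\<^sup>2))"
  have eps: "eps > 0" "eps \<le> e0" using \<open>e0 > 0\<close> \<eta> L_pos by (simp_all add: eps_def)
  show thesis
  proof (rule that[OF eps(1)])
    have "eps \<le> \<eta> / (4 * L\<^sup>2)" by (simp add: eps_def)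
    then show "L\<^sup>2 * eps / 2 \<le> \<eta> / 8" using L_pos by (simp add: field_simps)
    fix N t h s k
    assume th: "(t, h) \<in> strip T" and sk: "(s, k) \<in> strip T"
      and large: "M + \<eta> / 2 \<le> doubling eps gam lam N t h s k"
    have "\<not> (B < h \<or> B < k)"
      using B[OF eps(1) th sk, of N] large by linarith
    moreover have "\<bar>t - s\<bar> < min \<rho>u \<rho>v"
      by (rule e0[OF eps th sk large])
    ultimately show "\<bar>u (t, h) - u (s, h)\<bar> < \<eta> / 8 \<and> \<bar>v (t, h) - v (s, h)\<bar> < \<eta> / 8"
      using \<rho>u \<rho>v th sk by (auto simp: strip_def)
  qed
qed

theorem initial_bound_propagates:
  assumes initial: "\<And>h. h \<ge> 0 \<Longrightarrow> u (0, h) - v (0, h) \<le> M" and t0: "t0 \<ge> 0" and h0: "h0 \<ge> 0"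
  shows "u (t0, h0) - v (t0, h0) \<le> M"
proof (rule ccontr)
  define \<eta> where "\<eta> = u (t0, h0) - v (t0, h0) - M"
  assume "\<not> u (t0, h0) - v (t0, h0) \<le> M"
  then have \<eta>: "\<eta> > 0" unfolding \<eta>_def by simp
  define T where "T = t0 + 1"
  have T: "T \<ge> 0" "t0 < T" unfolding T_def using t0 by simp_all
  obtain A where A: "difference_bounded T A"
    using exists_difference_bound[OF T(1)] ..
  obtain N lam gam where N: "N \<ge> 1" "8 * L * (1 + T) \<le> real N" and lam: "lam > 0"
    and ref: "penalty lam N t0 h0 = \<eta> / 4" and mu: "\<bar>A - M\<bar> + (2 * L + 1)\<^sup>2 + 1 \<le> lam * (1 + T) ^ N"
    and gam: "0 < gam" "gam \<le> lam" "gam \<le> 1" "8 * L * gam < lam * real N"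
    by (rule exists_doubling_parameters[OF t0 T(2) \<eta>]) (rule that)
  obtain eps where eps: "eps > 0" "L\<^sup>2 * eps / 2 \<le> \<eta> / 8"
    and oscillation: "\<And>t h s k. (t, h) \<in> strip T \<Longrightarrow> (s, k) \<in> strip T \<Longrightarrow>
      M + \<eta> / 2 \<le> doubling eps gam lam N t h s k \<Longrightarrow>
      \<bar>u (t, h) - u (s, h)\<bar> < \<eta> / 8 \<and> \<bar>v (t, h) - v (s, h)\<bar> < \<eta> / 8"
    by (rule exists_eps_small_oscillation[OF A lam \<eta>]) (rule that)
  obtain t h s k where th: "(t, h) \<in> strip T" and sk: "(s, k) \<in> strip T"
    and max: "\<And>t' h' s' k'. (t', h') \<in> strip T \<Longrightarrow> (s', k') \<in> strip T \<Longrightarrow>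
      doubling eps gam lam N t' h' s' k' \<le> doubling eps gam lam N t h s k"
    by (rule doubling_attains_max[OF A eps(1) lam T(1)]) (rule that)
  have "doubling eps gam lam N t0 h0 t0 h0
      = u (t0, h0) - v (t0, h0) + 2 * (gam * h0) - 2 * penalty lam N t0 h0"
    by (simp add: doubling_def doubling_penalty_def)
  then have "M + \<eta> / 2 \<le> doubling eps gam lam N t0 h0 t0 h0"
    using ref mult_nonneg_nonneg[OF less_imp_le[OF gam(1)] h0] unfolding \<eta>_def by (simp add: field_simps)
  also have "\<dots> \<le> doubling eps gam lam N t h s k"
    using max t0 h0 T by (simp add: strip_def)
  finally have large: "M + \<eta> / 2 \<le> doubling eps gam lam N t h s k" .
  then have "0 < t" "t < T" "0 < s" "s < T"
    using doubling_max_interior[OF initial A eps less_imp_le[OF gam(1)] gam(2,3) mu th sk large]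
      oscillation[OF th sk large] by auto
  then show False
    using no_interior_doubling_max[OF eps(1) lam gam(1) N gam(4) max] th sk
    by (auto simp: strip_def)
qed

end

theorem proposition4p2:
  fixes u v :: "real \<times> real \<Rightarrow> real"
  assumes "viscosity_subsolution u"
    and "viscosity_supersolution v"
    and "unif_lipschitz_in_h u"
    and "unif_lipschitz_in_h v"
  shows "(SUP x\<in>quadrant. ereal (u x - v x)) = (SUP h\<in>{0..}. ereal (u (0, h) - v (0, h)))"
proof -
  obtain Lu where Lu: "\<forall>t h h'. t \<ge> 0 \<and> h \<ge> 0 \<and> h' \<ge> 0 \<longrightarrow>
      \<bar>u (t, h) - u (t, h')\<bar> \<le> Lu * \<bar>h - h'\<bar>"
    using assms(3) unfolding unif_lipschitz_in_h_def ..
  obtain Lv where Lv: "\<forall>t h h'. t \<ge> 0 \<and> h \<ge> 0 \<and> h' \<ge> 0 \<longrightarrow>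
      \<bar>v (t, h) - v (t, h')\<bar> \<le> Lv * \<bar>h - h'\<bar>"
    using assms(4) unfolding unif_lipschitz_in_h_def ..
  define L where "L = max (max Lu Lv) 1"
  have "Lu \<le> L" and "Lv \<le> L" by (simp_all add: L_def)
  interpret comparison u v L
  proof
    fix t h h' :: real assume nonneg: "t \<ge> 0" "h \<ge> 0" "h' \<ge> 0"
    have "\<bar>u (t, h) - u (t, h')\<bar> \<le> Lu * \<bar>h - h'\<bar>" using Lu nonneg by blast
    also have "\<dots> \<le> L * \<bar>h - h'\<bar>" using \<open>Lu \<le> L\<close> by (rule mult_right_mono) simp
    finally show "\<bar>u (t, h) - u (t, h')\<bar> \<le> L * \<bar>h - h'\<bar>" .
    have "\<bar>v (t, h) - v (t, h')\<bar> \<le> Lv * \<bar>h - h'\<bar>" using Lv nonneg by blast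
    also have "\<dots> \<le> L * \<bar>h - h'\<bar>" using \<open>Lv \<le> L\<close> by (rule mult_right_mono) simp
    finally show "\<bar>v (t, h) - v (t, h')\<bar> \<le> L * \<bar>h - h'\<bar>" .
  qed (use assms(1,2) in \<open>simp_all add: L_def\<close>)
  show ?thesis
  proof (rule antisym)
    show "(SUP x\<in>quadrant. ereal (u x - v x)) \<le> (SUP h\<in>{0..}. ereal (u (0, h) - v (0, h)))"
    proof (rule SUP_least, rule ereal_le_real)
      fix x M assume "x \<in> quadrant" and "(SUP h\<in>{0..}. ereal (u (0, h) - v (0, h))) \<le> ereal M"
      then show "ereal (u x - v x) \<le> ereal M"
        using initial_bound_propagates[of M "fst x" "snd x"] by (auto simp: SUP_le_iff quadrant_def)
    qed
    show "(SUP h\<in>{0..}. ereal (u (0, h) - v (0, h))) \<le> (SUP x\<in>quadrant. ereal (u x - v x))"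
      by (rule SUP_least, rule SUP_upper2[of "(0, _)"]) (auto simp: quadrant_def)
  qed
qed

end
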